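(* Let $F\subseteq\{1,\dots,d\}$ and $\beta=\hat\beta(F)$. Let $\beta'\in\mathbb{R}^d$ have support $F'$, and let $s$ be a positive integer with $|F\cup F'|\le s$. Let $i$ be an index satisfying $Q(\beta)-\min_{\eta}Q(\beta+\eta e_i)\ge Q(\beta)-\min_{j,\eta}Q(\beta+\eta e_j)$ (i.e. $i$ attains the maximal single-coordinate decrease). Then $$|F'-F|\big(Q(\beta)-\min_\eta Q(\beta+\eta e_i)\big)\ge\frac{\rho_-(s)}{\rho_+(1)}\big(Q(\beta)-Q(\beta')\big).$$
   Context: Let $Q:\mathbb{R}^d\to\mathbb{R}$ be convex and continuously differentiable. $e_j$ is the $j$-th standard basis vector, $\mathrm{supp}(\beta)=\{j:\beta_j\ne0\}$, $\|\beta\|_0=|\mathrm{supp}(\beta)|$, $A-B$ is set difference. For $F\subseteq\{1,\dots,d\}$, $\hat\beta(F)$ denotes a minimizer of $Q$ over $\{\beta:\mathrm{supp}(\beta)\subseteq F\}$ (assumed to exist). For a positive integer $s$, the restricted strong convexity constants $\rho_-(s),\rho_+(s)>0$ are constants such that for all $\beta,\beta'\in\mathbb{R}^d$ with $\|\beta'-\beta\|_0\le s$: $\frac{\rho_-(s)}{2}\|\beta'-\beta\|^2\le Q(\beta')-Q(\beta)-\langle\nabla Q(\beta),\beta'-\beta\rangle\le\frac{\rho_+(s)}{2}\|\beta'-\beta\|^2.$ *)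

theory Defs
  imports "HOL-Analysis.Analysis"
begin

text \<open>Vectors in R^d are modelled as real^'n with d = CARD('n).\<close>

definition supp :: "real^'n \<Rightarrow> 'n set" where
  "supp x = {j. x $ j \<noteq> 0}"

definition norm0 :: "real^'n \<Rightarrow> nat" where
  "norm0 x = card (supp x)"

definition ebasis :: "'n \<Rightarrow> real^'n" where
  "ebasis j = axis j 1"

definition is_restricted_min :: "(real^'n \<Rightarrow> real) \<Rightarrow> 'n set \<Rightarrow> real^'n \<Rightarrow> bool" where
  "is_restricted_min Q F b \<longleftrightarrow> supp b \<subseteq> F \<and> (\<forall>c. supp c \<subseteq> F \<longrightarrow> Q b \<le> Q c)"

text \<open>Restricted strong convexity/smoothness with constants rm = rho_-(s), rp = rho_+(s);
  G is the gradient of Q.\<close>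
definition rsc :: "(real^'n \<Rightarrow> real) \<Rightarrow> (real^'n \<Rightarrow> real^'n) \<Rightarrow> nat \<Rightarrow> real \<Rightarrow> real \<Rightarrow> bool" where
  "rsc Q G s rm rp \<longleftrightarrow> rm > 0 \<and> rp > 0 \<and>
     (\<forall>b b'. norm0 (b' - b) \<le> s \<longrightarrow>
        rm / 2 * (norm (b' - b))^2 \<le> Q b' - Q b - G b \<bullet> (b' - b) \<and>
        Q b' - Q b - G b \<bullet> (b' - b) \<le> rp / 2 * (norm (b' - b))^2)"

end

theory Submission
  imports Defs
begin

text \<open>Write \<open>g = \<nabla>Q(\<beta>)\<close>. Restricted smoothness along one coordinate shows that a single
  coordinate step from \<open>\<beta>\<close> decreases \<open>Q\<close> by at least \<open>g\<^sub>j\<^sup>2 / (2\<rho>\<^sub>+(1))\<close>, and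
  optimality of \<open>\<beta>\<close> on \<open>F\<close> forces \<open>g\<^sub>j = 0\<close> for \<open>j \<in> F\<close>. Restricted strong convexity on
  \<open>\<beta>' - \<beta>\<close>, minimised coordinatewise, bounds \<open>Q(\<beta>) - Q(\<beta>')\<close> by the sum of
  \<open>g\<^sub>j\<^sup>2 / (2\<rho>\<^sub>-(s))\<close> over \<open>j \<in> F' - F\<close>. Bounding each summand by the best coordinate
  decrease yields the claim.\<close>

lemma quadratic_ge_vertex_value:
  fixes a g t :: real
  assumes "a > 0"
  shows "- (g\<^sup>2 / (2 * a)) \<le> g * t + a / 2 * t\<^sup>2"
proof -
  have "0 \<le> (a * t + g)\<^sup>2" by simp
  then show ?thesis using assms by (simp add: field_simps power2_eq_square)
qed

lemma quadratic_vertex_value: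
  fixes a g :: real
  assumes "a > 0"
  shows "g * (- g / a) + a / 2 * (- g / a)\<^sup>2 = - (g\<^sup>2 / (2 * a))"
  using assms by (simp add: field_simps power2_eq_square)

lemma norm0_scaleR_ebasis: "norm0 (t *\<^sub>R ebasis j :: real^'n) \<le> 1"
proof -
  have "supp (t *\<^sub>R ebasis j :: real^'n) \<subseteq> {j}"
    by (auto simp: supp_def ebasis_def axis_def)
  then show ?thesis
    unfolding norm0_def by (metis card_mono card.empty card_insert_disjoint empty_iff finite.intros One_nat_def)
qed

lemma rsc_coordinate_bounds:
  assumes "rsc Q G s rm rp" and "s > 0"
  shows "Q b + G b $ j * t + rm / 2 * t\<^sup>2 \<le> Q (b + t *\<^sub>R ebasis j)"
    and "Q (b + t *\<^sub>R ebasis j) \<le> Q b + G b $ j * t + rp / 2 * t\<^sup>2"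
proof -
  have "norm0 ((b + t *\<^sub>R ebasis j) - b) \<le> s"
    using norm0_scaleR_ebasis[of t j] assms(2) by simp
  then have bounds: "rm / 2 * (norm (t *\<^sub>R ebasis j))\<^sup>2 \<le> Q (b + t *\<^sub>R ebasis j) - Q b - G b \<bullet> (t *\<^sub>R ebasis j)"
      "Q (b + t *\<^sub>R ebasis j) - Q b - G b \<bullet> (t *\<^sub>R ebasis j) \<le> rp / 2 * (norm (t *\<^sub>R ebasis j))\<^sup>2"
    using assms(1) unfolding rsc_def by (metis add_diff_cancel_left')+
  have coord: "G b \<bullet> (t *\<^sub>R ebasis j) = G b $ j * t" "(norm (t *\<^sub>R ebasis j))\<^sup>2 = t\<^sup>2"
    by (simp_all add: ebasis_def inner_axis)
  show "Q b + G b $ j * t + rm / 2 * t\<^sup>2 \<le> Q (b + t *\<^sub>R ebasis j)"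
    using bounds(1) unfolding coord by linarith
  show "Q (b + t *\<^sub>R ebasis j) \<le> Q b + G b $ j * t + rp / 2 * t\<^sup>2"
    using bounds(2) unfolding coord by linarith
qed

lemma restricted_min_gradient_vanishes:
  assumes "is_restricted_min Q F b" and "rsc Q G s rm rp" and "s > 0" and "j \<in> F"
  shows "G b $ j = 0"
proof -
  let ?t = "- G b $ j / rp"
  have rp: "rp > 0" using assms(2) by (simp add: rsc_def)
  have "supp (b + ?t *\<^sub>R ebasis j) \<subseteq> F"
    using assms(1,4) by (auto simp: is_restricted_min_def supp_def ebasis_def axis_def)
  then have "Q b \<le> Q (b + ?t *\<^sub>R ebasis j)"
    using assms(1) by (simp add: is_restricted_min_def)
  also have "\<dots> \<le> Q b + G b $ j * ?t + rp / 2 * ?t\<^sup>2"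
    by (rule rsc_coordinate_bounds(2)[OF assms(2,3)])
  also have "\<dots> = Q b - (G b $ j)\<^sup>2 / (2 * rp)"
    using quadratic_vertex_value[OF rp] by simp
  finally have "(G b $ j)\<^sup>2 / (2 * rp) \<le> 0" by simp
  then show ?thesis using rp by (simp add: divide_le_0_iff)
qed

definition coordinate_decrease :: "(real^'n \<Rightarrow> real) \<Rightarrow> real^'n \<Rightarrow> 'n \<Rightarrow> real" where
  "coordinate_decrease Q b j = Q b - (INF t. Q (b + t *\<^sub>R ebasis j))"

text \<open>Without this the infima below are unspecified values of \<open>Inf\<close> on a set unbounded below.\<close>

lemma rsc_coordinate_lines_bdd_below:
  fixes G :: "real^'n \<Rightarrow> real^'n"
  assumes "rsc Q G s rm rp" and "s > 0"
  shows "bdd_below (range (\<lambda>p. Q (b + snd p *\<^sub>R ebasis (fst p))))"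
proof (rule bdd_belowI2)
  fix p :: "'n \<times> real"
  obtain j t where p: "p = (j, t)" by fastforce
  have rm: "rm > 0" using assms(1) by (simp add: rsc_def)
  have "(G b $ j)\<^sup>2 \<le> (norm (G b))\<^sup>2"
    using component_le_norm_cart[of "G b" j] by (metis abs_ge_zero power2_abs power_mono)
  then have "Q b - (norm (G b))\<^sup>2 / (2 * rm) \<le> Q b - (G b $ j)\<^sup>2 / (2 * rm)"
    using rm by (simp add: divide_right_mono)
  also have "\<dots> \<le> Q b + G b $ j * t + rm / 2 * t\<^sup>2"
    using quadratic_ge_vertex_value[OF rm] by simp
  also have "\<dots> \<le> Q (b + t *\<^sub>R ebasis j)"
    by (rule rsc_coordinate_bounds(1)[OF assms])
  finally show "Q b - (norm (G b))\<^sup>2 / (2 * rm) \<le> Q (b + snd p *\<^sub>R ebasis (fst p))"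
    by (simp add: p)
qed

lemma coordinate_decrease_le_best:
  assumes "rsc Q G s rm rp" and "s > 0"
  shows "coordinate_decrease Q b j \<le> Q b - (INF p. Q (b + snd p *\<^sub>R ebasis (fst p)))"
proof -
  have "(INF p. Q (b + snd p *\<^sub>R ebasis (fst p))) \<le> (INF t. Q (b + t *\<^sub>R ebasis j))"
    using cINF_lower[OF rsc_coordinate_lines_bdd_below[OF assms], of "(j, _)"]
    by (intro cINF_greatest) auto
  then show ?thesis unfolding coordinate_decrease_def by simp
qed

lemma coordinate_decrease_ge_gradient:
  assumes "rsc Q G s rm rp" and "s > 0"
  shows "(G b $ j)\<^sup>2 / (2 * rp) \<le> coordinate_decrease Q b j"
proof -
  have rp: "rp > 0" using assms(1) by (simp add: rsc_def)
  have "range (\<lambda>t. Q (b + t *\<^sub>R ebasis j)) \<subseteq> range (\<lambda>p. Q (b + snd p *\<^sub>R ebasis (fst p)))"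
  proof
    fix x assume "x \<in> range (\<lambda>t. Q (b + t *\<^sub>R ebasis j))"
    then obtain t where "x = Q (b + t *\<^sub>R ebasis j)" by blast
    then show "x \<in> range (\<lambda>p. Q (b + snd p *\<^sub>R ebasis (fst p)))"
      by (intro range_eqI[of _ _ "(j, t)"]) simp
  qed
  then have bdd: "bdd_below (range (\<lambda>t. Q (b + t *\<^sub>R ebasis j)))"
    by (rule bdd_below_mono[OF rsc_coordinate_lines_bdd_below[OF assms]])
  have "(INF t. Q (b + t *\<^sub>R ebasis j)) \<le> Q (b + (- G b $ j / rp) *\<^sub>R ebasis j)"
    by (rule cINF_lower[OF bdd]) simp
  also have "\<dots> \<le> Q b + G b $ j * (- G b $ j / rp) + rp / 2 * (- G b $ j / rp)\<^sup>2"
    by (rule rsc_coordinate_bounds(2)[OF assms])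
  also have "\<dots> = Q b - (G b $ j)\<^sup>2 / (2 * rp)"
    using quadratic_vertex_value[OF rp] by simp
  finally show ?thesis unfolding coordinate_decrease_def by simp
qed

lemma inner_plus_sq_norm_ge:
  fixes g d :: "real^'n" and a :: real
  assumes "a > 0" and "\<And>j. j \<notin> K \<Longrightarrow> g $ j = 0 \<or> d $ j = 0"
  shows "- (\<Sum>j\<in>K. (g $ j)\<^sup>2 / (2 * a)) \<le> g \<bullet> d + a / 2 * (norm d)\<^sup>2"
proof -
  have "(norm d)\<^sup>2 = (\<Sum>j\<in>UNIV. (d $ j)\<^sup>2)"
    unfolding power2_norm_eq_inner by (simp add: inner_vec_def power2_eq_square)
  then have "g \<bullet> d + a / 2 * (norm d)\<^sup>2 = (\<Sum>j\<in>UNIV. g $ j * d $ j + a / 2 * (d $ j)\<^sup>2)"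
    by (simp add: inner_vec_def sum.distrib sum_distrib_left)
  also have "\<dots> \<ge> (\<Sum>j\<in>UNIV. if j \<in> K then - ((g $ j)\<^sup>2 / (2 * a)) else 0)"
    using quadratic_ge_vertex_value[OF assms(1)] assms
    by (intro sum_mono) (fastforce simp: zero_le_mult_iff)
  moreover have "(\<Sum>j\<in>UNIV. if j \<in> K then - ((g $ j)\<^sup>2 / (2 * a)) else 0)
      = - (\<Sum>j\<in>K. (g $ j)\<^sup>2 / (2 * a))"
    by (simp add: sum.If_cases sum_negf)
  ultimately show ?thesis by linarith
qed

lemma restricted_min_gap_le:
  assumes min: "is_restricted_min Q F b" and rsc: "rsc Q G s rm rp" and "s > 0"
    and card: "card (F \<union> supp b') \<le> s"
  shows "Q b - Q b' \<le> (\<Sum>j\<in>supp b' - F. (G b $ j)\<^sup>2 / (2 * rm))"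
proof -
  have rm: "rm > 0" using rsc by (simp add: rsc_def)
  have "supp (b' - b) \<subseteq> F \<union> supp b'"
    using min by (auto simp: supp_def is_restricted_min_def)
  then have "norm0 (b' - b) \<le> s"
    unfolding norm0_def using card by (meson card_mono finite le_trans)
  then have "rm / 2 * (norm (b' - b))\<^sup>2 \<le> Q b' - Q b - G b \<bullet> (b' - b)"
    using rsc unfolding rsc_def by blast
  moreover have "- (\<Sum>j\<in>supp b' - F. (G b $ j)\<^sup>2 / (2 * rm)) \<le> G b \<bullet> (b' - b) + rm / 2 * (norm (b' - b))\<^sup>2"
  proof (rule inner_plus_sq_norm_ge[OF rm])
    fix j assume "j \<notin> supp b' - F"
    show "G b $ j = 0 \<or> (b' - b) $ j = 0"
    proof (cases "j \<in> F")
      case True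
      then show ?thesis using restricted_min_gradient_vanishes[OF min rsc \<open>s > 0\<close>] by blast
    next
      case False
      then have "b $ j = 0" "b' $ j = 0"
        using \<open>j \<notin> supp b' - F\<close> min by (auto simp: supp_def is_restricted_min_def)
      then show ?thesis by simp
    qed
  qed
  ultimately show ?thesis by linarith
qed

theorem mainTheorem10:
  fixes Q :: "real^'n \<Rightarrow> real" and G :: "real^'n \<Rightarrow> real^'n"
    and rho_m rho_p :: "nat \<Rightarrow> real"
    and F :: "'n set" and b b' :: "real^'n" and s :: nat and i :: 'n
  assumes convex: "convex_on UNIV Q"
    and grad: "\<And>x. (Q has_derivative (\<lambda>h. G x \<bullet> h)) (at x)"
    and grad_cont: "continuous_on UNIV G"
    and rsc_s: "rsc Q G s (rho_m s) (rho_p s)"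
    and rsc_1: "rsc Q G 1 (rho_m 1) (rho_p 1)"
    and bmin: "is_restricted_min Q F b"
    and s_pos: "s > 0"
    and card_le: "card (F \<union> supp b') \<le> s"
    and i_max: "Q b - (INF \<eta>. Q (b + \<eta> *\<^sub>R ebasis i))
                  \<ge> Q b - (INF p. Q (b + snd p *\<^sub>R ebasis (fst p)))"
  shows "real (card (supp b' - F)) * (Q b - (INF \<eta>. Q (b + \<eta> *\<^sub>R ebasis i)))
           \<ge> rho_m s / rho_p 1 * (Q b - Q b')"
proof -
  let ?D = "coordinate_decrease Q b i" and ?K = "supp b' - F"
  have rm: "rho_m s > 0" and rp: "rho_p 1 > 0"
    using rsc_s rsc_1 by (simp_all add: rsc_def)
  have "(G b $ j)\<^sup>2 / (2 * rho_m s) \<le> rho_p 1 / rho_m s * ?D" for j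
  proof -
    have "(G b $ j)\<^sup>2 / (2 * rho_p 1) \<le> ?D"
      using coordinate_decrease_ge_gradient[OF rsc_1, of b j]
        coordinate_decrease_le_best[OF rsc_1, of b j] i_max
      unfolding coordinate_decrease_def by linarith
    then have "rho_p 1 / rho_m s * ((G b $ j)\<^sup>2 / (2 * rho_p 1)) \<le> rho_p 1 / rho_m s * ?D"
      using rm rp by (intro mult_left_mono) auto
    moreover have "rho_p 1 / rho_m s * ((G b $ j)\<^sup>2 / (2 * rho_p 1)) = (G b $ j)\<^sup>2 / (2 * rho_m s)"
      using rp by simp
    ultimately show ?thesis by simp
  qed
  then have "(\<Sum>j\<in>?K. (G b $ j)\<^sup>2 / (2 * rho_m s)) \<le> (\<Sum>j\<in>?K. rho_p 1 / rho_m s * ?D)"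
    by (intro sum_mono)
  then have "(\<Sum>j\<in>?K. (G b $ j)\<^sup>2 / (2 * rho_m s)) \<le> rho_p 1 / rho_m s * (real (card ?K) * ?D)"
    by (simp add: mult.left_commute)
  then have "Q b - Q b' \<le> rho_p 1 / rho_m s * (real (card ?K) * ?D)"
    using restricted_min_gap_le[OF bmin rsc_s s_pos card_le] by linarith
  then have "rho_m s / rho_p 1 * (Q b - Q b') \<le> rho_m s / rho_p 1 * (rho_p 1 / rho_m s * (real (card ?K) * ?D))"
    using rm rp by (intro mult_left_mono) auto
  also have "\<dots> = real (card ?K) * ?D"
    using rm rp by simp
  finally show ?thesis unfolding coordinate_decrease_def .
qed

end
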